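(* Let $n\ge2$, let $G$ be an absolutely continuous distribution function on $[0,\infty)$, $\lambda>0$, $\alpha_1,\dots,\alpha_n,\alpha^*_1,\dots,\alpha^*_n>0$. Let $\phi_1,\phi_2$ be Archimedean generators with pseudo-inverses $\psi_1,\psi_2$. Let $\boldsymbol{X}=(X_1,\dots,X_n)$ have joint distribution function $\phi_1\big(\sum_{i=1}^n\psi_1([G(\lambda x_i)]^{\alpha_i})\big)$ and $\boldsymbol{X}^*$ have joint distribution function $\phi_2\big(\sum_{i=1}^n\psi_2([G(\lambda x_i)]^{\alpha^*_i})\big)$. If $\phi_1$ or $\phi_2$ is log-convex, $\psi_2\circ\phi_1$ is super-additive, and $\prod_{i=1}^{j}\alpha^*_{[i]}\le\prod_{i=1}^{j}\alpha_{[i]}$ for all $j=1,\dots,n$, then $X_{n:n}\ge_{\rm st}X^*_{n:n}$.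
   Context: An Archimedean generator is an $n$-monotone function $\phi:[0,\infty)\to[0,1]$ with $\phi(0)=1$, $\lim_{x\to\infty}\phi(x)=0$ ($n$-monotone: $(-1)^k\phi^{(k)}\ge0$ for $k=0,\dots,n-2$ and $(-1)^{n-2}\phi^{(n-2)}$ decreasing and convex); $\psi=\phi^{-1}$ is its pseudo-inverse. $h$ super-additive means $h(x+y)\ge h(x)+h(y)$ for $x,y\ge0$. $\alpha_{[1]}\ge\dots\ge\alpha_{[n]}$ are the components in decreasing order. $X_{n:n}=\max_i X_i$. $X\le_{\rm st}Y$ means $P(X>x)\le P(Y>x)$ for all $x$. *)

theory Defs
  imports "HOL-Probability.Probability"
begin

definition abs_cont_cdf_nonneg :: "(real \<Rightarrow> real) \<Rightarrow> bool" where
  "abs_cont_cdf_nonneg G \<longleftrightarrow>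
     (\<exists>M. real_distribution M \<and> absolutely_continuous lborel M \<and>
          measure M {..<0} = 0 \<and> (\<forall>x. G x = measure M {..x}))"

definition n_monotone :: "nat \<Rightarrow> (real \<Rightarrow> real) \<Rightarrow> bool" where
  "n_monotone n \<phi> \<longleftrightarrow>
     (\<forall>k < n - 2. \<forall>x > 0. (deriv ^^ k) \<phi> differentiable at x) \<and>
     (\<forall>k \<le> n - 2. \<forall>x > 0. (-1) ^ k * (deriv ^^ k) \<phi> x \<ge> 0) \<and>
     antimono_on {0<..} (\<lambda>x. (-1) ^ (n - 2) * (deriv ^^ (n - 2)) \<phi> x) \<and>
     convex_on {0<..} (\<lambda>x. (-1) ^ (n - 2) * (deriv ^^ (n - 2)) \<phi> x)"

definition archimedean_generator :: "nat \<Rightarrow> (real \<Rightarrow> real) \<Rightarrow> bool" where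
  "archimedean_generator n \<phi> \<longleftrightarrow>
     (\<forall>x \<ge> 0. 0 \<le> \<phi> x \<and> \<phi> x \<le> 1) \<and> continuous_on {0..} \<phi> \<and>
     \<phi> 0 = 1 \<and> (\<phi> \<longlongrightarrow> 0) at_top \<and> n_monotone n \<phi>"

text \<open>Pseudo-inverse, extended-real valued: psi t = inf {x >= 0. phi x = t}
  (= infinity if the set is empty, e.g. psi 0 for a strict generator).\<close>
definition pseudo_inv :: "(real \<Rightarrow> real) \<Rightarrow> real \<Rightarrow> ereal" where
  "pseudo_inv \<phi> t = Inf {ereal x | x. 0 \<le> x \<and> \<phi> x = t}"

definition gen_ext :: "(real \<Rightarrow> real) \<Rightarrow> ereal \<Rightarrow> real" where
  "gen_ext \<phi> s = (if s = \<infinity> then 0 else \<phi> (real_of_ereal s))"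

definition arch_joint_cdf ::
  "nat \<Rightarrow> (real \<Rightarrow> real) \<Rightarrow> (real \<Rightarrow> real) \<Rightarrow> real \<Rightarrow> (nat \<Rightarrow> real) \<Rightarrow> (nat \<Rightarrow> real) \<Rightarrow> real" where
  "arch_joint_cdf n \<phi> G lam \<alpha> x =
     gen_ext \<phi> (\<Sum>i<n. pseudo_inv \<phi> (G (lam * x i) powr \<alpha> i))"

definition log_convex :: "(real \<Rightarrow> real) \<Rightarrow> bool" where
  "log_convex \<phi> \<longleftrightarrow> (\<forall>x y t. 0 \<le> x \<longrightarrow> 0 \<le> y \<longrightarrow> 0 < t \<longrightarrow> t < 1 \<longrightarrow>
      \<phi> (t * x + (1 - t) * y) \<le> \<phi> x powr t * \<phi> y powr (1 - t))"

definition superadditive_ext :: "(real \<Rightarrow> ereal) \<Rightarrow> bool" where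
  "superadditive_ext h \<longleftrightarrow> (\<forall>x y. 0 \<le> x \<longrightarrow> 0 \<le> y \<longrightarrow> h (x + y) \<ge> h x + h y)"

definition decr_sorted :: "nat \<Rightarrow> (nat \<Rightarrow> real) \<Rightarrow> real list" where
  "decr_sorted n \<alpha> = rev (sort (map \<alpha> [0..<n]))"

end

theory Submission
  imports Defs
begin

text \<open>
  The event \<open>X\<^sub>n\<^sub>:\<^sub>n \<le> t\<close> has probability \<open>\<phi>\<^sub>1(\<Sum> \<psi>\<^sub>1(u\<^bsup>\<alpha>\<^sub>i\<^esup>))\<close> with \<open>u = G(\<lambda>t)\<close>, and likewise for
  \<open>X\<^sup>*\<close>. Two comparisons are chained. Superadditivity of \<open>\<psi>\<^sub>2 \<circ> \<phi>\<^sub>1\<close> gives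
  \<open>\<phi>\<^sub>1(\<Sum> \<psi>\<^sub>1(v\<^sub>i)) \<le> \<phi>\<^sub>2(\<Sum> \<psi>\<^sub>2(v\<^sub>i))\<close> for any \<open>v\<^sub>i \<in> [0,1]\<close>. For a log-convex generator \<open>\<phi>\<close> and
  \<open>0 < u < 1\<close>, the function \<open>s \<mapsto> \<psi>(u\<^bsup>exp s\<^esup>)\<close> is increasing and convex, so weak
  majorization of \<open>ln \<alpha>\<^sup>*\<close> by \<open>ln \<alpha>\<close> (the product condition) yields
  \<open>\<Sum> \<psi>(u\<^bsup>\<alpha>\<^sup>*\<^sub>i\<^esup>) \<le> \<Sum> \<psi>(u\<^bsup>\<alpha>\<^sub>i\<^esup>)\<close> by the Tomic-Weyl inequality. Changing the exponents on the
  side of whichever generator is log-convex, and the generator on the other side, gives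
  \<open>P(X\<^sub>n\<^sub>:\<^sub>n \<le> t) \<le> P(X\<^sup>*\<^sub>n\<^sub>:\<^sub>n \<le> t)\<close>.
\<close>

subsection \<open>Archimedean generators and their pseudo-inverses\<close>

lemma pseudo_inv_eq_Inf_image: "pseudo_inv \<phi> t = Inf (ereal ` {x. 0 \<le> x \<and> \<phi> x = t})"
  unfolding pseudo_inv_def by (rule arg_cong[where f=Inf]) auto

lemma pseudo_inv_nonneg: "0 \<le> pseudo_inv \<phi> t"
  unfolding pseudo_inv_eq_Inf_image by (auto intro!: Inf_greatest)

lemma pseudo_inv_empty:
  assumes "{x. 0 \<le> x \<and> \<phi> x = t} = {}"
  shows "pseudo_inv \<phi> t = \<infinity>"
  unfolding pseudo_inv_eq_Inf_image assms by (simp add: top_ereal_def)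

lemma archimedean_generator_range:
  "archimedean_generator n \<phi> \<Longrightarrow> 0 \<le> x \<Longrightarrow> 0 \<le> \<phi> x \<and> \<phi> x \<le> 1"
  unfolding archimedean_generator_def by auto

lemma archimedean_generator_hits_below:
  assumes g: "archimedean_generator n \<phi>" and "0 \<le> y" "\<phi> y \<le> v" "v \<le> 1"
  obtains x where "0 \<le> x" "x \<le> y" "\<phi> x = v"
proof -
  have "continuous_on {0..y} \<phi>" "\<phi> 0 = 1"
    using g unfolding archimedean_generator_def by (auto intro: continuous_on_subset)
  then show ?thesis using IVT2'[of \<phi> y v 0] assms that by auto
qed

lemma pseudo_inv_le:
  assumes "archimedean_generator n \<phi>" "0 \<le> y" "\<phi> y \<le> v" "v \<le> 1"
  shows "pseudo_inv \<phi> v \<le> ereal y"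
proof -
  obtain x where x: "0 \<le> x" "x \<le> y" "\<phi> x = v"
    using archimedean_generator_hits_below[OF assms] .
  then have "pseudo_inv \<phi> v \<le> ereal x"
    unfolding pseudo_inv_eq_Inf_image by (auto intro!: Inf_lower)
  also have "\<dots> \<le> ereal y" using x by simp
  finally show ?thesis .
qed

lemma archimedean_generator_level_set_nonempty:
  assumes g: "archimedean_generator n \<phi>" and v: "0 < v" "v \<le> 1"
  shows "{x. 0 \<le> x \<and> \<phi> x = v} \<noteq> {}"
proof -
  have "(\<phi> \<longlongrightarrow> 0) at_top" using g unfolding archimedean_generator_def by auto
  then have "eventually (\<lambda>x. \<phi> x < v) at_top" using v by (auto dest: order_tendstoD)
  then obtain y where y: "\<And>x. x \<ge> y \<Longrightarrow> \<phi> x < v" by (auto simp: eventually_at_top_linorder)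
  have "\<phi> (max y 0) \<le> v" using y[of "max y 0"] by simp
  then obtain x where "0 \<le> x" "\<phi> x = v"
    using archimedean_generator_hits_below[OF g _ _ v(2), of "max y 0"] by auto
  then show ?thesis by auto
qed

lemma pseudo_inv_attained:
  assumes g: "archimedean_generator n \<phi>" and ne: "{x. 0 \<le> x \<and> \<phi> x = v} \<noteq> {}"
  shows "\<exists>r\<ge>0. pseudo_inv \<phi> v = ereal r \<and> \<phi> r = v"
proof -
  define S where "S = {x. 0 \<le> x \<and> \<phi> x = v}"
  have "continuous_on {0..} \<phi>" using g unfolding archimedean_generator_def by auto
  then have "closed {x \<in> {0..}. \<phi> x = v}"
    by (rule continuous_closed_preimage_constant[OF _ closed_atLeast])
  moreover have "{x \<in> {0..}. \<phi> x = v} = S" unfolding S_def by auto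
  ultimately have "closed S" by simp
  moreover have bdd: "bdd_below S" unfolding S_def by (auto intro!: bdd_belowI[where m=0])
  moreover have "S \<noteq> {}" using ne by (simp add: S_def)
  ultimately have "Inf S \<in> S" using closed_contains_Inf by blast
  moreover have "pseudo_inv \<phi> v = ereal (Inf S)"
    unfolding pseudo_inv_eq_Inf_image S_def[symmetric]
    using ereal_Inf'[OF bdd \<open>S \<noteq> {}\<close>] by (simp add: image_def)
  ultimately show ?thesis unfolding S_def by auto
qed

lemma pseudo_inv_finite:
  assumes g: "archimedean_generator n \<phi>" and "pseudo_inv \<phi> v \<noteq> \<infinity>"
  shows "\<exists>r\<ge>0. pseudo_inv \<phi> v = ereal r \<and> \<phi> r = v"
  using pseudo_inv_attained[OF g] pseudo_inv_empty assms(2) by blast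

lemma pseudo_inv_pos:
  assumes g: "archimedean_generator n \<phi>" and "0 < v" "v \<le> 1"
  shows "\<exists>r\<ge>0. pseudo_inv \<phi> v = ereal r \<and> \<phi> r = v"
  using pseudo_inv_attained[OF g archimedean_generator_level_set_nonempty[OF assms]] .

lemma gen_ext_pseudo_inv:
  assumes g: "archimedean_generator n \<phi>" and v: "0 \<le> v" "v \<le> 1"
  shows "gen_ext \<phi> (pseudo_inv \<phi> v) = v"
proof (cases "v = 0 \<and> {x. 0 \<le> x \<and> \<phi> x = v} = {}")
  case True
  then have "pseudo_inv \<phi> v = \<infinity>" using pseudo_inv_empty by blast
  with True show ?thesis by (simp add: gen_ext_def)
next
  case False
  then have "{x. 0 \<le> x \<and> \<phi> x = v} \<noteq> {}"
    using archimedean_generator_level_set_nonempty[OF g _ v(2)] v(1) by force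
  then have "\<exists>r\<ge>0. pseudo_inv \<phi> v = ereal r \<and> \<phi> r = v" by (rule pseudo_inv_attained[OF g])
  then obtain r where "pseudo_inv \<phi> v = ereal r" "\<phi> r = v" by blast
  then show ?thesis by (simp add: gen_ext_def)
qed

text \<open>For \<open>n = 2\<close> monotonicity is the antimonotonicity clause of \<open>n_monotone\<close>; for
  \<open>n \<ge> 3\<close> it comes from the sign of the first derivative.\<close>

lemma archimedean_generator_antimono:
  assumes g: "archimedean_generator n \<phi>" and n: "n \<ge> 2" and xy: "0 \<le> x" "x \<le> y"
  shows "\<phi> y \<le> \<phi> x"
proof -
  have nm: "n_monotone n \<phi>" and phi0: "\<phi> 0 = 1"
    using g unfolding archimedean_generator_def by auto
  have "\<phi> y \<le> \<phi> x" if x0: "x > 0"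
  proof (cases "n = 2")
    case True
    then have "antimono_on {0<..} \<phi>" using nm unfolding n_monotone_def by simp
    then show ?thesis using x0 xy by (auto simp: monotone_on_def)
  next
    case False
    then have "0 < n - 2" "1 \<le> n - 2" using n by auto
    then have "\<phi> differentiable at z" "(-1) ^ 1 * (deriv ^^ 1) \<phi> z \<ge> 0" if "z > 0" for z
      using nm that unfolding n_monotone_def by (metis funpow_0, blast)
    then have "DERIV \<phi> z :> deriv \<phi> z \<and> deriv \<phi> z \<le> 0" if "z > 0" for z
      using that by (simp add: DERIV_deriv_iff_real_differentiable)
    then show ?thesis
      using DERIV_nonpos_imp_nonincreasing[OF xy(2)] x0 by (meson less_le_trans)
  qed
  moreover have "\<phi> y \<le> \<phi> 0"
    using archimedean_generator_range[OF g, of y] xy phi0 by simp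
  ultimately show ?thesis using xy by fastforce
qed

lemma gen_ext_nonneg:
  assumes g: "archimedean_generator n \<phi>" and "0 \<le> s"
  shows "0 \<le> gen_ext \<phi> s"
  using assms archimedean_generator_range[OF g, of "real_of_ereal s"]
  unfolding gen_ext_def by (auto simp: real_of_ereal_pos)

lemma gen_ext_antimono:
  assumes g: "archimedean_generator n \<phi>" and n: "n \<ge> 2" and ab: "0 \<le> a" "a \<le> b"
  shows "gen_ext \<phi> b \<le> gen_ext \<phi> a"
proof (cases "b = \<infinity>")
  case True
  then show ?thesis using gen_ext_nonneg[OF g ab(1)] by (simp add: gen_ext_def)
next
  case False
  then obtain ra rb where "a = ereal ra" "b = ereal rb" using ab by (cases a; cases b) auto
  then show ?thesis using archimedean_generator_antimono[OF g n, of ra rb] ab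
    by (simp add: gen_ext_def)
qed

subsection \<open>Changing the generator\<close>

lemma superadditive_ext_sum:
  fixes h :: "real \<Rightarrow> ereal" and r :: "nat \<Rightarrow> real"
  assumes sup: "superadditive_ext h" and h0: "0 \<le> h 0" and r: "\<forall>i<m. 0 \<le> r i"
  shows "(\<Sum>i<m. h (r i)) \<le> h (\<Sum>i<m. r i)"
  using r
proof (induction m)
  case 0
  then show ?case using h0 by simp
next
  case (Suc m)
  have "(\<Sum>i<Suc m. h (r i)) \<le> h (\<Sum>i<m. r i) + h (r m)"
    using Suc by (simp add: add_right_mono)
  also have "\<dots> \<le> h ((\<Sum>i<m. r i) + r m)"
    using sup Suc.prems sum_nonneg[of "{..<m}" r] lessI unfolding superadditive_ext_def
    by (metis less_SucI lessThan_iff)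
  finally show ?case by simp
qed

lemma gen_ext_sum_pseudo_inv_le_of_superadditive:
  fixes n :: nat
  assumes g1: "archimedean_generator N \<phi>1" and g2: "archimedean_generator N \<phi>2" and N: "N \<ge> 2"
    and sup: "superadditive_ext (\<lambda>x. pseudo_inv \<phi>2 (\<phi>1 x))"
    and v: "\<forall>i<n. 0 \<le> v i \<and> v i \<le> 1"
  shows "gen_ext \<phi>1 (\<Sum>i<n. pseudo_inv \<phi>1 (v i)) \<le> gen_ext \<phi>2 (\<Sum>i<n. pseudo_inv \<phi>2 (v i))"
proof (cases "\<exists>i<n. pseudo_inv \<phi>1 (v i) = \<infinity>")
  case True
  then have "(\<Sum>i<n. pseudo_inv \<phi>1 (v i)) = \<infinity>" by (auto simp: sum_Pinfty)
  then show ?thesis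
    using gen_ext_nonneg[OF g2] by (simp add: gen_ext_def sum_nonneg pseudo_inv_nonneg)
next
  case False
  define r where "r i = real_of_ereal (pseudo_inv \<phi>1 (v i))" for i
  have r: "pseudo_inv \<phi>1 (v i) = ereal (r i) \<and> 0 \<le> r i \<and> \<phi>1 (r i) = v i" if "i < n" for i
    using pseudo_inv_finite[OF g1, of "v i"] False that by (auto simp: r_def)
  define R where "R = (\<Sum>i<n. r i)"
  have "R \<ge> 0" unfolding R_def using r by (intro sum_nonneg) auto
  have "gen_ext \<phi>1 (\<Sum>i<n. pseudo_inv \<phi>1 (v i)) = \<phi>1 R"
    using r by (simp add: R_def gen_ext_def)
  also have "\<dots> = gen_ext \<phi>2 (pseudo_inv \<phi>2 (\<phi>1 R))"
    using gen_ext_pseudo_inv[OF g2] archimedean_generator_range[OF g1 \<open>R \<ge> 0\<close>] by simp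
  also have "\<dots> \<le> gen_ext \<phi>2 (\<Sum>i<n. pseudo_inv \<phi>2 (\<phi>1 (r i)))"
    unfolding R_def
    by (intro gen_ext_antimono[OF g2 N] superadditive_ext_sum[OF sup])
       (use r in \<open>auto simp: sum_nonneg pseudo_inv_nonneg\<close>)
  also have "\<dots> = gen_ext \<phi>2 (\<Sum>i<n. pseudo_inv \<phi>2 (v i))"
    using r by simp
  finally show ?thesis .
qed

subsection \<open>The Tomic-Weyl inequality\<close>

definition chord_slope :: "(real \<Rightarrow> real) \<Rightarrow> real \<Rightarrow> real \<Rightarrow> real" where
  "chord_slope k p q = (k p - k q) / (p - q)"

lemma chord_slope_commute: "chord_slope k p q = chord_slope k q p"
  unfolding chord_slope_def by (cases "p = q") (auto simp: field_simps)

lemma chord_slope_mono_left: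
  assumes cv: "convex_on UNIV k" and "a \<le> a'" "a \<noteq> b" "a' \<noteq> b"
  shows "chord_slope k a b \<le> chord_slope k a' b"
proof (cases "a = a'")
  case False
  then have lt: "a < a'" using assms by simp
  consider "b < a" | "a < b" "b < a'" | "a' < b" using assms lt by linarith
  then show ?thesis
  proof cases
    case 1
    then show ?thesis using convex_on_slope_le(1)[OF cv _ _ 1 lt]
      unfolding chord_slope_def by (simp add: chord_slope_commute[unfolded chord_slope_def])
  next
    case 2
    then have "chord_slope k a b \<le> chord_slope k a a'" "chord_slope k a a' \<le> chord_slope k b a'"
      using convex_on_slope_le[OF cv, of a a' b] unfolding chord_slope_def by auto
    then show ?thesis using chord_slope_commute[of k b a'] by simp
  next
    case 3
    then show ?thesis using convex_on_slope_le(2)[OF cv _ _ lt 3]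
      unfolding chord_slope_def by simp
  qed
qed simp

lemma chord_slope_mono:
  assumes cv: "convex_on UNIV k" and "a \<le> a'" "b \<le> b'" "a \<noteq> b" "a' \<noteq> b'"
  shows "chord_slope k a b \<le> chord_slope k a' b'"
proof (cases "a' = b")
  case False
  have "chord_slope k a b \<le> chord_slope k a' b" using chord_slope_mono_left[OF cv] assms False by simp
  also have "\<dots> = chord_slope k b a'" by (rule chord_slope_commute)
  also have "\<dots> \<le> chord_slope k b' a'" using chord_slope_mono_left[OF cv] assms False by simp
  finally show ?thesis by (simp add: chord_slope_commute)
next
  case True
  then have "a \<noteq> b'" using assms by auto
  have "chord_slope k a b = chord_slope k b a" by (rule chord_slope_commute)
  also have "\<dots> \<le> chord_slope k b' a" using chord_slope_mono_left[OF cv] assms \<open>a \<noteq> b'\<close> by simp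
  also have "\<dots> = chord_slope k a b'" by (rule chord_slope_commute)
  also have "\<dots> \<le> chord_slope k a' b'" using chord_slope_mono_left[OF cv] assms \<open>a \<noteq> b'\<close> by simp
  finally show ?thesis .
qed

lemma abel_summation_lower_bound:
  fixes c d :: "nat \<Rightarrow> real"
  assumes dec: "\<forall>i j. i < j \<longrightarrow> j < n \<longrightarrow> d i \<noteq> 0 \<longrightarrow> d j \<noteq> 0 \<longrightarrow> c j \<le> c i"
    and partial: "\<forall>m\<le>n. 0 \<le> (\<Sum>i<m. d i)"
  shows "m \<le> n \<Longrightarrow> 0 \<le> \<gamma> \<Longrightarrow> \<forall>i<m. d i \<noteq> 0 \<longrightarrow> \<gamma> \<le> c i \<Longrightarrow>
         \<gamma> * (\<Sum>i<m. d i) \<le> (\<Sum>i<m. c i * d i)"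
proof (induction m arbitrary: \<gamma>)
  case 0
  then show ?case by simp
next
  case (Suc m)
  show ?case
  proof (cases "d m = 0")
    case True
    then show ?thesis using Suc.IH[of \<gamma>] Suc.prems by simp
  next
    case False
    have cm: "\<gamma> \<le> c m" using Suc.prems False by auto
    have ih: "c m * (\<Sum>i<m. d i) \<le> (\<Sum>i<m. c i * d i)"
      using Suc.IH[of "c m"] Suc.prems dec False cm by simp
    have "0 \<le> (\<Sum>i<Suc m. d i)" using partial Suc.prems(1) by blast
    then have "\<gamma> * (\<Sum>i<Suc m. d i) \<le> c m * (\<Sum>i<Suc m. d i)"
      using cm by (rule mult_right_mono[rotated])
    also have "\<dots> = c m * (\<Sum>i<m. d i) + c m * d m" by (simp add: distrib_left)
    also have "\<dots> \<le> (\<Sum>i<Suc m. c i * d i)" using ih by simp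
    finally show ?thesis .
  qed
qed

text \<open>Writing \<open>k(x\<^sub>i) - k(y\<^sub>i) = c\<^sub>i (x\<^sub>i - y\<^sub>i)\<close> with chord slopes \<open>c\<^sub>i \<ge> 0\<close> (monotonicity),
  which decrease in \<open>i\<close> (convexity), reduces the claim to Abel summation.\<close>

lemma sum_mono_convex_le_of_weak_majorization:
  fixes x y :: "nat \<Rightarrow> real" and k :: "real \<Rightarrow> real"
  assumes cv: "convex_on UNIV k" and mo: "mono k"
    and x_dec: "\<forall>i j. i \<le> j \<longrightarrow> j < n \<longrightarrow> x j \<le> x i"
    and y_dec: "\<forall>i j. i \<le> j \<longrightarrow> j < n \<longrightarrow> y j \<le> y i"
    and maj: "\<forall>m\<le>n. (\<Sum>i<m. y i) \<le> (\<Sum>i<m. x i)"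
  shows "(\<Sum>i<n. k (y i)) \<le> (\<Sum>i<n. k (x i))"
proof -
  define c where "c i = chord_slope k (x i) (y i)" for i
  define d where "d i = x i - y i" for i
  have diff: "k (x i) - k (y i) = c i * d i" for i
    by (cases "x i = y i") (simp_all add: c_def d_def chord_slope_def)
  have dec: "\<forall>i j. i < j \<longrightarrow> j < n \<longrightarrow> d i \<noteq> 0 \<longrightarrow> d j \<noteq> 0 \<longrightarrow> c j \<le> c i"
    using x_dec y_dec chord_slope_mono[OF cv] unfolding c_def d_def by simp
  have partial: "\<forall>m\<le>n. 0 \<le> (\<Sum>i<m. d i)"
    using maj by (simp add: d_def sum_subtractf)
  have c_nonneg: "0 \<le> c i" for i
    using mo unfolding c_def chord_slope_def mono_def
    by (cases "x i \<le> y i") (auto intro: divide_nonpos_nonpos divide_nonneg_nonneg)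
  have "0 * (\<Sum>i<n. d i) \<le> (\<Sum>i<n. c i * d i)"
    by (rule abel_summation_lower_bound[OF dec partial]) (simp_all add: c_nonneg)
  also have "\<dots> = (\<Sum>i<n. k (x i)) - (\<Sum>i<n. k (y i))"
    by (simp add: diff[symmetric] sum_subtractf)
  finally show ?thesis by simp
qed

lemma length_decr_sorted [simp]: "length (decr_sorted n \<beta>) = n"
  by (simp add: decr_sorted_def)

lemma set_decr_sorted: "set (decr_sorted n \<beta>) = \<beta> ` {..<n}"
  by (auto simp: decr_sorted_def)

lemma decr_sorted_nth_antimono: "i \<le> j \<Longrightarrow> j < n \<Longrightarrow> decr_sorted n \<beta> ! j \<le> decr_sorted n \<beta> ! i"
  by (rule sorted_rev_nth_mono) (simp_all add: decr_sorted_def)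

lemma decr_sorted_nth_pos: "\<forall>i<n. \<beta> i > 0 \<Longrightarrow> j < n \<Longrightarrow> 0 < decr_sorted n \<beta> ! j"
  using nth_mem[of j "decr_sorted n \<beta>"] by (auto simp: set_decr_sorted)

lemma sum_decr_sorted: "(\<Sum>i<n. f (decr_sorted n \<beta> ! i)) = (\<Sum>i<n. f (\<beta> i))"
proof -
  have "(\<Sum>i<n. f (decr_sorted n \<beta> ! i)) = sum_list (map f (decr_sorted n \<beta>))"
    by (simp add: sum_list_sum_nth atLeast0LessThan)
  also have "\<dots> = sum_list (map f (map \<beta> [0..<n]))"
    by (metis decr_sorted_def mset_map mset_rev mset_sort sum_mset_sum_list)
  also have "\<dots> = (\<Sum>i<n. f (\<beta> i))"
    by (simp add: interv_sum_list_conv_sum_set_nat atLeast0LessThan comp_def)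
  finally show ?thesis .
qed

lemma prod_list_pos: "\<forall>x\<in>set xs. 0 < (x::real) \<Longrightarrow> 0 < prod_list xs"
  by (induction xs) auto

lemma ln_prod_list: "\<forall>x\<in>set xs. 0 < (x::real) \<Longrightarrow> ln (prod_list xs) = sum_list (map ln xs)"
proof (induction xs)
  case (Cons a xs)
  then show ?case using prod_list_pos[of xs] by (simp add: ln_mult)
qed simp

lemma ln_prod_take_decr_sorted:
  assumes pos: "\<forall>i<n. \<beta> i > 0" and m: "m \<le> n"
  shows "ln (prod_list (take m (decr_sorted n \<beta>))) = (\<Sum>i<m. ln (decr_sorted n \<beta> ! i))"
proof -
  have "\<forall>x\<in>set (decr_sorted n \<beta>). 0 < x" using pos by (simp add: set_decr_sorted)
  then have "\<forall>x\<in>set (take m (decr_sorted n \<beta>)). 0 < x" by (blast dest: in_set_takeD)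
  then show ?thesis
    using m by (simp add: ln_prod_list sum_list_sum_nth atLeast0LessThan min_def)
qed

lemma prod_take_decr_sorted_pos:
  assumes "\<forall>i<n. \<beta> i > 0"
  shows "0 < prod_list (take m (decr_sorted n \<beta>))"
proof (rule prod_list_pos)
  have "\<forall>x\<in>set (decr_sorted n \<beta>). 0 < x" using assms by (simp add: set_decr_sorted)
  then show "\<forall>x\<in>set (take m (decr_sorted n \<beta>)). 0 < x" by (blast dest: in_set_takeD)
qed

lemma weak_majorization_ln_decr_sorted:
  assumes apos: "\<forall>i<n. \<alpha> i > 0" and bpos: "\<forall>i<n. \<beta> i > 0"
    and maj: "\<forall>j\<in>{1..n}. prod_list (take j (decr_sorted n \<beta>)) \<le> prod_list (take j (decr_sorted n \<alpha>))"
    and m: "m \<le> n"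
  shows "(\<Sum>i<m. ln (decr_sorted n \<beta> ! i)) \<le> (\<Sum>i<m. ln (decr_sorted n \<alpha> ! i))"
proof (cases "m = 0")
  case False
  then have "prod_list (take m (decr_sorted n \<beta>)) \<le> prod_list (take m (decr_sorted n \<alpha>))"
    using maj m by simp
  then show ?thesis
    using prod_take_decr_sorted_pos[OF apos] prod_take_decr_sorted_pos[OF bpos]
    by (simp add: ln_prod_take_decr_sorted[OF apos m, symmetric]
        ln_prod_take_decr_sorted[OF bpos m, symmetric])
qed simp

subsection \<open>Changing the exponents under a log-convex generator\<close>

definition pseudo_inv_powr_exp :: "(real \<Rightarrow> real) \<Rightarrow> real \<Rightarrow> real \<Rightarrow> real" where
  "pseudo_inv_powr_exp \<phi> u s = real_of_ereal (pseudo_inv \<phi> (u powr exp s))"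

lemma pseudo_inv_powr_exp:
  assumes g: "archimedean_generator n \<phi>" and u: "0 < u" "u \<le> 1"
  shows "pseudo_inv \<phi> (u powr exp s) = ereal (pseudo_inv_powr_exp \<phi> u s)"
    and "0 \<le> pseudo_inv_powr_exp \<phi> u s"
    and "\<phi> (pseudo_inv_powr_exp \<phi> u s) = u powr exp s"
proof -
  have "0 < u powr exp s" "u powr exp s \<le> 1" using u by (simp_all add: powr_le1)
  then obtain r where "r \<ge> 0" "pseudo_inv \<phi> (u powr exp s) = ereal r" "\<phi> r = u powr exp s"
    using pseudo_inv_pos[OF g] by blast
  then show "pseudo_inv \<phi> (u powr exp s) = ereal (pseudo_inv_powr_exp \<phi> u s)"
    and "0 \<le> pseudo_inv_powr_exp \<phi> u s" and "\<phi> (pseudo_inv_powr_exp \<phi> u s) = u powr exp s"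
    by (simp_all add: pseudo_inv_powr_exp_def)
qed

lemma mono_pseudo_inv_powr_exp:
  assumes g: "archimedean_generator n \<phi>" and u: "0 < u" "u \<le> 1"
  shows "mono (pseudo_inv_powr_exp \<phi> u)"
proof (rule monoI)
  fix s t :: real
  assume "s \<le> t"
  note F = pseudo_inv_powr_exp[OF g u]
  have "\<phi> (pseudo_inv_powr_exp \<phi> u t) \<le> u powr exp s"
    using \<open>s \<le> t\<close> u by (simp add: F(3) powr_mono')
  moreover have "u powr exp s \<le> 1" using u by (simp add: powr_le1)
  ultimately have "pseudo_inv \<phi> (u powr exp s) \<le> ereal (pseudo_inv_powr_exp \<phi> u t)"
    by (rule pseudo_inv_le[OF g F(2)])
  then show "pseudo_inv_powr_exp \<phi> u s \<le> pseudo_inv_powr_exp \<phi> u t"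
    by (simp add: F(1))
qed

text \<open>Log-convexity of \<open>\<phi>\<close> at the convex combination \<open>z\<close> of the two preimages, followed by
  convexity of \<open>exp\<close> (\<open>u \<le> 1\<close> reverses it), shows \<open>\<phi> z \<le> u\<^bsup>exp((1-\<theta>)x+\<theta>y)\<^esup>\<close>, so the
  pseudo-inverse of the latter is at most \<open>z\<close>.\<close>

lemma convex_pseudo_inv_powr_exp:
  assumes g: "archimedean_generator n \<phi>" and lc: "log_convex \<phi>" and u: "0 < u" "u \<le> 1"
  shows "convex_on UNIV (pseudo_inv_powr_exp \<phi> u)"
proof (rule convex_onI)
  fix \<theta> x y :: real
  assume \<theta>: "0 < \<theta>" "\<theta> < 1"
  let ?F = "pseudo_inv_powr_exp \<phi> u"
  define z where "z = (1 - \<theta>) * ?F x + \<theta> * ?F y"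
  note F = pseudo_inv_powr_exp[OF g u]
  have "0 \<le> z" using F(2)[of x] F(2)[of y] \<theta> by (simp add: z_def)
  have "\<phi> z \<le> \<phi> (?F x) powr (1 - \<theta>) * \<phi> (?F y) powr \<theta>"
    using lc[unfolded log_convex_def, rule_format, of "?F x" "?F y" "1 - \<theta>"] F(2) \<theta>
    by (simp add: z_def)
  also have "\<dots> = u powr ((1 - \<theta>) * exp x + \<theta> * exp y)"
    by (simp add: F(3) powr_powr powr_add[symmetric] ac_simps)
  also have "\<dots> \<le> u powr exp ((1 - \<theta>) * x + \<theta> * y)"
    using convex_onD[OF exp_convex, of \<theta> x y] \<theta> u by (intro powr_mono') auto
  finally have "pseudo_inv \<phi> (u powr exp ((1 - \<theta>) * x + \<theta> * y)) \<le> ereal z"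
    using pseudo_inv_le[OF g \<open>0 \<le> z\<close>] u by (simp add: powr_le1)
  then show "?F ((1 - \<theta>) *\<^sub>R x + \<theta> *\<^sub>R y) \<le> (1 - \<theta>) * ?F x + \<theta> * ?F y"
    using F(1)[of "(1 - \<theta>) * x + \<theta> * y"] by (simp add: z_def)
qed simp

lemma gen_ext_sum_pseudo_inv_powr_le_of_log_majorization:
  fixes n :: nat and \<alpha> \<beta> :: "nat \<Rightarrow> real"
  assumes g: "archimedean_generator N \<phi>" and N: "N \<ge> 2" and lc: "log_convex \<phi>"
    and apos: "\<forall>i<n. \<alpha> i > 0" and bpos: "\<forall>i<n. \<beta> i > 0"
    and maj: "\<forall>j\<in>{1..n}. prod_list (take j (decr_sorted n \<beta>)) \<le> prod_list (take j (decr_sorted n \<alpha>))"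
    and u: "0 \<le> u" "u \<le> 1"
  shows "gen_ext \<phi> (\<Sum>i<n. pseudo_inv \<phi> (u powr \<alpha> i))
       \<le> gen_ext \<phi> (\<Sum>i<n. pseudo_inv \<phi> (u powr \<beta> i))"
proof (cases "u = 0")
  case True
  then show ?thesis by simp
next
  case False
  then have u': "0 < u" "u \<le> 1" using u by auto
  let ?F = "pseudo_inv_powr_exp \<phi> u"
  have sum_eq: "(\<Sum>i<n. pseudo_inv \<phi> (u powr \<gamma> i)) = ereal (\<Sum>i<n. ?F (ln (decr_sorted n \<gamma> ! i)))"
    if "\<forall>i<n. \<gamma> i > 0" for \<gamma>
  proof -
    have "(\<Sum>i<n. pseudo_inv \<phi> (u powr \<gamma> i)) = (\<Sum>i<n. ereal (?F (ln (\<gamma> i))))"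
    proof (rule sum.cong)
      fix i assume "i \<in> {..<n}"
      then show "pseudo_inv \<phi> (u powr \<gamma> i) = ereal (?F (ln (\<gamma> i)))"
        using that pseudo_inv_powr_exp(1)[OF g u', of "ln (\<gamma> i)"] by simp
    qed simp
    then show ?thesis by (simp add: sum_decr_sorted[of "\<lambda>b. ?F (ln b)"])
  qed
  have ln_dec: "\<forall>i j. i \<le> j \<longrightarrow> j < n \<longrightarrow> ln (decr_sorted n \<gamma> ! j) \<le> ln (decr_sorted n \<gamma> ! i)"
    if "\<forall>i<n. \<gamma> i > 0" for \<gamma>
    using decr_sorted_nth_antimono decr_sorted_nth_pos[OF that] by simp
  have "(\<Sum>i<n. ?F (ln (decr_sorted n \<beta> ! i))) \<le> (\<Sum>i<n. ?F (ln (decr_sorted n \<alpha> ! i)))"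
    using sum_mono_convex_le_of_weak_majorization[OF convex_pseudo_inv_powr_exp[OF g lc u']
        mono_pseudo_inv_powr_exp[OF g u'] ln_dec[OF apos] ln_dec[OF bpos]]
      weak_majorization_ln_decr_sorted[OF apos bpos maj] by blast
  then show ?thesis
    unfolding sum_eq[OF apos] sum_eq[OF bpos]
    by (intro gen_ext_antimono[OF g N]) (simp_all add: sum_nonneg pseudo_inv_powr_exp(2)[OF g u'])
qed

lemma gen_ext_sum_pseudo_inv_powr_le:
  fixes n :: nat and \<alpha> \<beta> :: "nat \<Rightarrow> real"
  assumes n2: "n \<ge> 2"
    and apos: "\<forall>i<n. \<alpha> i > 0" and bpos: "\<forall>i<n. \<beta> i > 0"
    and g1: "archimedean_generator n \<phi>1" and g2: "archimedean_generator n \<phi>2"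
    and logc: "log_convex \<phi>1 \<or> log_convex \<phi>2"
    and sup: "superadditive_ext (\<lambda>x. pseudo_inv \<phi>2 (\<phi>1 x))"
    and maj: "\<forall>j\<in>{1..n}. prod_list (take j (decr_sorted n \<beta>)) \<le> prod_list (take j (decr_sorted n \<alpha>))"
    and u: "0 \<le> u" "u \<le> 1"
  shows "gen_ext \<phi>1 (\<Sum>i<n. pseudo_inv \<phi>1 (u powr \<alpha> i))
       \<le> gen_ext \<phi>2 (\<Sum>i<n. pseudo_inv \<phi>2 (u powr \<beta> i))"
proof -
  have unit: "\<forall>i<n. 0 \<le> u powr \<gamma> i \<and> u powr \<gamma> i \<le> 1" if "\<forall>i<n. \<gamma> i > 0" for \<gamma>
    using that u by (simp add: powr_le1 less_imp_le)
  note change_generator = gen_ext_sum_pseudo_inv_le_of_superadditive[OF g1 g2 n2 sup unit]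
  note change_exponents = gen_ext_sum_pseudo_inv_powr_le_of_log_majorization[OF _ n2 _ apos bpos maj u]
  from logc show ?thesis
    using order_trans[OF change_exponents[OF g1] change_generator[OF bpos]]
      order_trans[OF change_generator[OF apos] change_exponents[OF g2]] by blast
qed

lemma abs_cont_cdf_nonneg_range:
  assumes "abs_cont_cdf_nonneg G"
  shows "0 \<le> G x \<and> G x \<le> 1"
proof -
  obtain M where "real_distribution M" "\<forall>x. G x = measure M {..x}"
    using assms unfolding abs_cont_cdf_nonneg_def by blast
  then show ?thesis by (simp add: real_distribution_def prob_space.prob_le_1)
qed

lemma measure_Max_gt:
  fixes n :: nat and Y :: "nat \<Rightarrow> 'c \<Rightarrow> real"
  assumes N: "prob_space N" and n: "n > 0" and Y: "\<forall>i<n. Y i \<in> borel_measurable N"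
  shows "measure N {\<omega> \<in> space N. Max ((\<lambda>i. Y i \<omega>) ` {..<n}) > t}
       = 1 - measure N {\<omega> \<in> space N. \<forall>i<n. Y i \<omega> \<le> t}"
proof -
  have "{\<omega> \<in> space N. Y i \<omega> \<le> t} \<in> sets N" if "i \<in> {..<n}" for i
  proof -
    have [measurable]: "Y i \<in> borel_measurable N" using Y that by simp
    show ?thesis by measurable
  qed
  then have meas: "{\<omega> \<in> space N. \<forall>i<n. Y i \<omega> \<le> t} \<in> sets N"
    using sets.sets_Collect_finite_All[of "{..<n}" N "\<lambda>i \<omega>. Y i \<omega> \<le> t"] by simp
  have "t < Max ((\<lambda>i. Y i \<omega>) ` {..<n}) \<longleftrightarrow> \<not> (\<forall>i<n. Y i \<omega> \<le> t)" for \<omega>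
  proof -
    have "(\<lambda>i. Y i \<omega>) ` {..<n} \<noteq> {}" using n by blast
    then show ?thesis using Max_gr_iff[of "(\<lambda>i. Y i \<omega>) ` {..<n}"] by (auto simp: not_le)
  qed
  then have "{\<omega> \<in> space N. Max ((\<lambda>i. Y i \<omega>) ` {..<n}) > t}
      = space N - {\<omega> \<in> space N. \<forall>i<n. Y i \<omega> \<le> t}"
    by blast
  then show ?thesis by (simp only: prob_space.prob_compl[OF N meas])
qed

theorem mainTheorem13:
  fixes n :: nat and G :: "real \<Rightarrow> real" and lam :: real
    and \<alpha> \<alpha>s :: "nat \<Rightarrow> real" and \<phi>1 \<phi>2 :: "real \<Rightarrow> real"
    and M :: "'a measure" and Ms :: "'b measure"
    and X :: "nat \<Rightarrow> 'a \<Rightarrow> real" and Xs :: "nat \<Rightarrow> 'b \<Rightarrow> real"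
  assumes n2: "n \<ge> 2"
    and G: "abs_cont_cdf_nonneg G"
    and lam: "lam > 0"
    and apos: "\<forall>i<n. \<alpha> i > 0" and aspos: "\<forall>i<n. \<alpha>s i > 0"
    and gen1: "archimedean_generator n \<phi>1" and gen2: "archimedean_generator n \<phi>2"
    and M: "prob_space M" and Ms: "prob_space Ms"
    and Xmeas: "\<forall>i<n. X i \<in> borel_measurable M"
    and Xsmeas: "\<forall>i<n. Xs i \<in> borel_measurable Ms"
    and Xcdf: "\<forall>x. measure M {\<omega> \<in> space M. \<forall>i<n. X i \<omega> \<le> x i}
                   = arch_joint_cdf n \<phi>1 G lam \<alpha> x"
    and Xscdf: "\<forall>x. measure Ms {\<omega> \<in> space Ms. \<forall>i<n. Xs i \<omega> \<le> x i}
                   = arch_joint_cdf n \<phi>2 G lam \<alpha>s x"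
    and logc: "log_convex \<phi>1 \<or> log_convex \<phi>2"
    and sup: "superadditive_ext (\<lambda>x. pseudo_inv \<phi>2 (\<phi>1 x))"
    and maj: "\<forall>j\<in>{1..n}. prod_list (take j (decr_sorted n \<alpha>s)) \<le> prod_list (take j (decr_sorted n \<alpha>))"
  shows "\<forall>t. measure Ms {\<omega> \<in> space Ms. Max ((\<lambda>i. Xs i \<omega>) ` {..<n}) > t}
            \<le> measure M {\<omega> \<in> space M. Max ((\<lambda>i. X i \<omega>) ` {..<n}) > t}"
proof
  fix t :: real
  have "measure M {\<omega> \<in> space M. \<forall>i<n. X i \<omega> \<le> t}
      \<le> measure Ms {\<omega> \<in> space Ms. \<forall>i<n. Xs i \<omega> \<le> t}"
    using Xcdf[rule_format, of "\<lambda>_. t"] Xscdf[rule_format, of "\<lambda>_. t"]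
      gen_ext_sum_pseudo_inv_powr_le[OF n2 apos aspos gen1 gen2 logc sup maj]
      abs_cont_cdf_nonneg_range[OF G, of "lam * t"]
    by (simp add: arch_joint_cdf_def)
  then show "measure Ms {\<omega> \<in> space Ms. Max ((\<lambda>i. Xs i \<omega>) ` {..<n}) > t}
            \<le> measure M {\<omega> \<in> space M. Max ((\<lambda>i. X i \<omega>) ` {..<n}) > t}"
    using measure_Max_gt[OF M _ Xmeas] measure_Max_gt[OF Ms _ Xsmeas] n2 by simp
qed

end
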